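(* Let $L$ be an integer, $a,b$ divisors of $L$, $M=L/b$, and let $\mathbf g\in\mathbb C^L$ (indexed $L$-periodically) be a window such that $$K_{\mathbf g}:=\frac1b\min_{t\in\{0,\dots,M-1\}}\left(\sum_{k=0}^{b-1}|g[t+kM]|^2\right)>0.$$ Let $\mathcal S_{\mathbf X}[k]\ge 0$ be a power spectrum, $\sigma_0^2>0$, $\delta\in\mathbb R$, and let $C_{\mathbf G}$ be the $M\times M$ matrix $$C_{\mathbf G}[m,m']=C_{\mathcal G_{\mathbf Z}}[m-\delta,m'-\delta]+C_{\mathcal G_{\mathbf N}}[m,m'],$$ where $C_{\mathcal G_{\mathbf Z}}[\mu,\mu']=\sum_{k\in I^+}\mathcal S_{\mathbf X}[k]\,\overline{\hat g}(k-\mu b)\,\hat g(k-\mu'b)$ and $C_{\mathcal G_{\mathbf N}}[m,m']=\sigma_0^2\sum_{k=0}^{L-1}\overline{\hat g}[k]\hat g[k-(m'-m)b]$ (i.e. the covariance matrix of a fixed-time slice of the Gabor transform of a frequency-shifted wide-sense stationary analytic signal plus circular complex white Gaussian noise of variance $\sigma_0^2$). Then for all $\mathbf x\in\mathbb C^M$, $$\langle C_{\mathbf G}\mathbf x,\mathbf x\rangle\ge \sigma_0^2K_{\mathbf g}\|\mathbf x\|^2,$$ and $C_{\mathbf G}$ is therefore boundedly invertible.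
   Context: $\hat g(\xi)=\sum_{t=0}^{L-1}g[t]e^{-2i\pi\xi t/L}$ is the DFT of $\mathbf g$, evaluated at a possibly non-integer frequency $\xi$; $I^+=\{k:0\le k<L/2\}$ is the set of positive frequency indices. $\langle\cdot,\cdot\rangle$ is the standard Hermitian inner product on $\mathbb C^M$. *)

theory Defs
  imports "HOL-Analysis.Analysis"
begin

definition dft :: "nat \<Rightarrow> (nat \<Rightarrow> complex) \<Rightarrow> real \<Rightarrow> complex" where
  "dft L g xi = (\<Sum>t<L. g t * exp (- (2 * pi * \<i> * complex_of_real xi * of_nat t / of_nat L)))"

definition Iplus :: "nat \<Rightarrow> nat set" where
  "Iplus L = {k. real k < real L / 2}"

definition Kg :: "nat \<Rightarrow> nat \<Rightarrow> (nat \<Rightarrow> complex) \<Rightarrow> real" where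
  "Kg L b g = (1 / real b) *
     Min ((\<lambda>t. \<Sum>k<b. (cmod (g ((t + k * (L div b)) mod L)))\<^sup>2) ` {..<L div b})"

definition CGZ :: "nat \<Rightarrow> nat \<Rightarrow> (nat \<Rightarrow> real) \<Rightarrow> (nat \<Rightarrow> complex) \<Rightarrow> real \<Rightarrow> real \<Rightarrow> complex" where
  "CGZ L b S g \<mu> \<mu>' = (\<Sum>k\<in>Iplus L. complex_of_real (S k) *
       cnj (dft L g (real k - \<mu> * real b)) * dft L g (real k - \<mu>' * real b))"

definition CGN :: "nat \<Rightarrow> nat \<Rightarrow> real \<Rightarrow> (nat \<Rightarrow> complex) \<Rightarrow> nat \<Rightarrow> nat \<Rightarrow> complex" where
  "CGN L b \<sigma>0sq g m m' = complex_of_real \<sigma>0sq * (\<Sum>k<L.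
       cnj (dft L g (real k)) * dft L g (real k - (real m' - real m) * real b))"

definition CG :: "nat \<Rightarrow> nat \<Rightarrow> (nat \<Rightarrow> real) \<Rightarrow> real \<Rightarrow> real \<Rightarrow> (nat \<Rightarrow> complex) \<Rightarrow> nat \<Rightarrow> nat \<Rightarrow> complex" where
  "CG L b S \<sigma>0sq \<delta> g m m' = CGZ L b S g (real m - \<delta>) (real m' - \<delta>) + CGN L b \<sigma>0sq g m m'"

end

theory Submission
  imports Defs "Jordan_Normal_Form.Determinant"
begin

text \<open>
  Both parts of the covariance matrix are Gram matrices. The signal part contributes
  \<open>\<Sum>k. S k * |\<Sum>m. dft g (k - (m - \<delta>) b) * x m|\<^sup>2 \<ge> 0\<close>. In the noise part, shifting the
  frequency by \<open>(m' - m) b\<close> amounts to modulating \<open>g\<close> by \<open>exp (2\<pi>i t (m' - m) / M)\<close>, so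
  by Parseval its form is \<open>\<sigma>\<^sub>0\<^sup>2 L \<Sum>t<L. |g t|\<^sup>2 |X t|\<^sup>2\<close> with the \<open>M\<close>-periodic
  \<open>X t = \<Sum>m. exp (2\<pi>i t m / M) x m\<close>. Grouping \<open>t\<close> by its residue mod \<open>M\<close> bounds this below by
  \<open>\<sigma>\<^sub>0\<^sup>2 L b K\<^sub>g \<Sum>t<M. |X t|\<^sup>2\<close>, which is \<open>\<sigma>\<^sub>0\<^sup>2 L b M K\<^sub>g \<parallel>x\<parallel>\<^sup>2\<close> by Parseval on \<open>\<int>/M\<close>;
  the factor \<open>L b M \<ge> 1\<close> comes from the unnormalised DFT. A coercive form has trivial kernel,
  so the matrix is invertible.
\<close>

lemma sum_powers_root_of_unity:
  fixes z :: "'a :: field"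
  assumes "z ^ N = 1"
  shows "(\<Sum>k<N. z ^ k) = (if z = 1 then of_nat N else 0)"
  using assms by (simp add: geometric_sum)

lemma sum_exp_orthogonality:
  fixes N t t' :: nat
  assumes N: "N > 0" and t: "t < N" and t': "t' < N"
  shows "(\<Sum>k<N. exp (2*pi*\<i> * of_nat k * of_nat t / of_nat N) * exp (- (2*pi*\<i> * of_nat k * of_nat t' / of_nat N)))
         = (if t = t' then of_nat N else 0)"
proof -
  define w where "w j = exp (2 * of_real pi * \<i> * of_nat j / of_nat N)" for j
  define z where "z = w t / w t'"
  have "exp (2*pi*\<i> * of_nat k * of_nat t / of_nat N) * exp (- (2*pi*\<i> * of_nat k * of_nat t' / of_nat N)) = z ^ k" for k
  proof -
    have pow: "w j ^ k = exp (2*pi*\<i> * of_nat k * of_nat j / of_nat N)" for j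
      unfolding w_def exp_of_nat_mult[symmetric] by (simp add: mult_ac)
    have "z ^ k = w t ^ k / w t' ^ k"
      by (simp add: z_def power_divide)
    then show ?thesis
      unfolding pow by (simp add: exp_minus divide_inverse)
  qed
  moreover have "z ^ N = 1"
    using N by (simp add: z_def power_divide w_def complex_root_unity)
  moreover have "z = 1 \<longleftrightarrow> t = t'"
    using N t t' by (simp add: z_def w_def complex_root_unity_eq)
  ultimately show ?thesis
    by (simp add: sum_powers_root_of_unity)
qed

definition qform :: "nat \<Rightarrow> (nat \<Rightarrow> nat \<Rightarrow> complex) \<Rightarrow> (nat \<Rightarrow> complex) \<Rightarrow> complex" where
  "qform M C x = (\<Sum>m<M. (\<Sum>m'<M. C m m' * x m') * cnj (x m))"

lemma qform_add: "qform M (\<lambda>m m'. A m m' + B m m') x = qform M A x + qform M B x"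
  unfolding qform_def by (simp add: distrib_right sum.distrib)

lemma qform_gram:
  fixes w :: "'i \<Rightarrow> real" and h :: "'i \<Rightarrow> nat \<Rightarrow> complex"
  assumes "finite I"
  shows "qform M (\<lambda>m m'. \<Sum>k\<in>I. of_real (w k) * cnj (h k m) * h k m') x
       = of_real (\<Sum>k\<in>I. w k * (cmod (\<Sum>m<M. h k m * x m))\<^sup>2)"
proof -
  define T where "T k m' m = of_real (w k) * (h k m' * x m') * (cnj (h k m) * cnj (x m))" for k m' m
  have "qform M (\<lambda>m m'. \<Sum>k\<in>I. of_real (w k) * cnj (h k m) * h k m') x = (\<Sum>m<M. \<Sum>m'<M. \<Sum>k\<in>I. T k m' m)"
    unfolding qform_def sum_distrib_right T_def by (intro sum.cong refl) (simp add: mult_ac)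
  also have "\<dots> = (\<Sum>m'<M. \<Sum>m<M. \<Sum>k\<in>I. T k m' m)"
    by (rule sum.swap)
  also have "\<dots> = (\<Sum>m'<M. \<Sum>k\<in>I. \<Sum>m<M. T k m' m)"
    by (rule sum.cong[OF refl], rule sum.swap)
  also have "\<dots> = (\<Sum>k\<in>I. \<Sum>m'<M. \<Sum>m<M. T k m' m)"
    by (rule sum.swap)
  also have "\<dots> = (\<Sum>k\<in>I. of_real (w k) * ((\<Sum>m'<M. h k m' * x m') * cnj (\<Sum>m<M. h k m * x m)))"
    by (simp only: cnj_sum complex_cnj_mult sum_product) (simp only: T_def sum_distrib_left mult.assoc)
  also have "\<dots> = of_real (\<Sum>k\<in>I. w k * (cmod (\<Sum>m<M. h k m * x m))\<^sup>2)"
    unfolding of_real_sum of_real_mult complex_norm_square ..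
  finally show ?thesis .
qed

lemma invertible_if_qform_coercive:
  fixes C :: "nat \<Rightarrow> nat \<Rightarrow> complex"
  assumes c: "c > 0" and coercive: "\<And>x. Re (qform M C x) \<ge> c * (\<Sum>m<M. (cmod (x m))\<^sup>2)"
  shows "\<exists>D :: nat \<Rightarrow> nat \<Rightarrow> complex.
            (\<forall>i<M. \<forall>j<M. (\<Sum>l<M. C i l * D l j) = (if i = j then 1 else 0)) \<and>
            (\<forall>i<M. \<forall>j<M. (\<Sum>l<M. D i l * C l j) = (if i = j then 1 else 0))"
proof -
  define A where "A = Matrix.mat M M (\<lambda>(i, j). C i j)"
  have A: "A \<in> carrier_mat M M" by (simp add: A_def)
  have "Determinant.det A \<noteq> 0"
  proof
    assume "Determinant.det A = 0"
    then obtain v where v: "v \<in> carrier_vec M" "v \<noteq> 0\<^sub>v M" "A *\<^sub>v v = 0\<^sub>v M"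
      using det_0_iff_vec_prod_zero[OF A] by auto
    define x where "x l = (if l < M then v $ l else 0)" for l
    have "(\<Sum>m'<M. C m m' * x m') = (A *\<^sub>v v) $ m" if "m < M" for m
      using that v(1) by (auto simp: A_def scalar_prod_def x_def lessThan_atLeast0 intro!: sum.cong)
    then have "qform M C x = 0" using v(3) by (simp add: qform_def)
    with coercive[of x] have "c * (\<Sum>m<M. (cmod (x m))\<^sup>2) \<le> 0"
      by simp
    then have "(\<Sum>m<M. (cmod (x m))\<^sup>2) = 0"
      using c by (meson antisym sum_nonneg zero_le_power2 mult_le_0_iff not_le)
    then have "\<forall>m<M. (cmod (x m))\<^sup>2 = 0"
      by (subst (asm) sum_nonneg_eq_0_iff) auto
    then have "v = 0\<^sub>v M" using v(1) by (intro eq_vecI) (auto simp: x_def)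
    with v(2) show False by simp
  qed
  then obtain B where B: "B \<in> carrier_mat M M" "B * A = 1\<^sub>m M" "A * B = 1\<^sub>m M"
    using det_non_zero_imp_unit[OF A, of "()"] unfolding Units_def ring_mat_def by auto
  have "(A * B) $$ (i, j) = (\<Sum>l<M. C i l * B $$ (l, j))"
    and "(B * A) $$ (i, j) = (\<Sum>l<M. B $$ (i, l) * C l j)" if "i < M" "j < M" for i j
    using that A B(1) by (auto simp: A_def scalar_prod_def lessThan_atLeast0 intro!: sum.cong)
  with B show ?thesis by (intro exI[of _ "\<lambda>i j. B $$ (i, j)"]) auto
qed

definition fourier_mode :: "nat \<Rightarrow> nat \<Rightarrow> nat \<Rightarrow> complex" where
  "fourier_mode M m t = exp (2*pi*\<i> * of_nat t * of_nat m / of_nat M)"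

lemma cnj_fourier_mode:
  "cnj (fourier_mode M m t) = exp (- (2*pi*\<i> * of_nat t * of_nat m / of_nat M))"
  by (simp add: fourier_mode_def exp_cnj)

lemma fourier_mode_periodic:
  assumes "M > 0"
  shows "fourier_mode M m (t + j * M) = fourier_mode M m t"
proof -
  have "2*pi*\<i> * of_nat (t + j * M) * of_nat m / of_nat M
      = 2*pi*\<i> * of_nat t * of_nat m / of_nat M + of_nat (j * m) * (2*pi*\<i>)"
    using assms by (simp add: field_simps)
  then have "fourier_mode M m (t + j * M) = fourier_mode M m t * exp (of_nat (j * m) * (2*pi*\<i>))"
    by (simp only: fourier_mode_def exp_add)
  also have "exp (of_nat (j * m) * (2*pi*\<i>)) = 1"
    by (simp only: exp_of_nat_mult) (simp add: mult.commute)
  finally show ?thesis by simp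
qed

lemma sum_fourier_mode_orthogonality:
  assumes "M > 0" "m < M" "m' < M"
  shows "(\<Sum>t<M. cnj (fourier_mode M m t) * fourier_mode M m' t) = (if m = m' then of_nat M else 0)"
proof -
  have "(\<Sum>t<M. cnj (fourier_mode M m t) * fourier_mode M m' t)
      = (\<Sum>t<M. exp (2*pi*\<i> * of_nat t * of_nat m' / of_nat M) * exp (- (2*pi*\<i> * of_nat t * of_nat m / of_nat M)))"
    unfolding cnj_fourier_mode unfolding fourier_mode_def by (simp only: mult.commute)
  also have "\<dots> = (if m' = m then of_nat M else 0)"
    by (rule sum_exp_orthogonality[OF assms(1) assms(3,2)])
  finally show ?thesis by auto
qed

lemma parseval_fourier_modes:
  assumes "M > 0"
  shows "(\<Sum>t<M. (cmod (\<Sum>m<M. fourier_mode M m t * x m))\<^sup>2) = real M * (\<Sum>m<M. (cmod (x m))\<^sup>2)"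
proof -
  have "of_real (\<Sum>t<M. 1 * (cmod (\<Sum>m<M. fourier_mode M m t * x m))\<^sup>2)
      = qform M (\<lambda>m m'. \<Sum>t<M. of_real 1 * cnj (fourier_mode M m t) * fourier_mode M m' t) x"
    by (rule qform_gram[symmetric]) simp
  also have "\<dots> = (\<Sum>m<M. (\<Sum>m'<M. (if m = m' then x m' * of_nat M else 0)) * cnj (x m))"
    unfolding qform_def using sum_fourier_mode_orthogonality[OF assms]
    by (intro sum.cong refl arg_cong2[where f = times]) auto
  also have "\<dots> = of_real (real M * (\<Sum>m<M. (cmod (x m))\<^sup>2))"
    unfolding of_real_mult of_real_sum complex_norm_square sum_distrib_left
    by (simp add: algebra_simps)
  finally show ?thesis by (simp only: of_real_eq_iff mult_1)
qed

lemma dft_parseval: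
  assumes L: "L > 0"
  shows "(\<Sum>k<L. cnj (dft L g (real k)) * dft L h (real k)) = of_nat L * (\<Sum>t<L. cnj (g t) * h t)"
proof -
  define e where "e k t = exp (2*pi*\<i> * of_nat k * of_nat t / of_nat L)" for k t
  define e' where "e' k t = exp (- (2*pi*\<i> * of_nat k * of_nat t / of_nat L))" for k t
  have "cnj (dft L g (real k)) * dft L h (real k) = (\<Sum>t<L. \<Sum>t'<L. cnj (g t) * h t' * (e k t * e' k t'))" for k
  proof -
    have "cnj (dft L g (real k)) = (\<Sum>t<L. cnj (g t) * e k t)"
      by (simp add: dft_def e_def exp_cnj)
    moreover have "dft L h (real k) = (\<Sum>t'<L. h t' * e' k t')"
      by (simp add: dft_def e'_def)
    ultimately show ?thesis
      by (simp only: sum_product) (simp only: mult_ac)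
  qed
  then have "(\<Sum>k<L. cnj (dft L g (real k)) * dft L h (real k))
      = (\<Sum>t<L. \<Sum>t'<L. cnj (g t) * h t' * (\<Sum>k<L. e k t * e' k t'))"
    by (simp only: sum_distrib_left) (subst sum.swap, rule sum.cong[OF refl], rule sum.swap)
  also have "\<dots> = (\<Sum>t<L. \<Sum>t'<L. if t = t' then cnj (g t) * h t' * of_nat L else 0)"
    using sum_exp_orthogonality[OF L] by (intro sum.cong refl) (simp add: e_def e'_def)
  also have "\<dots> = of_nat L * (\<Sum>t<L. cnj (g t) * h t)"
    by (simp add: sum_distrib_left mult_ac)
  finally show ?thesis .
qed

lemma dft_shift_eq_dft_modulation:
  assumes "L = M * b" "M > 0" "b > 0"
  shows "dft L g (real k - (real m' - real m) * real b)
       = dft L (\<lambda>t. g t * cnj (fourier_mode M m t) * fourier_mode M m' t) (real k)"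
  unfolding dft_def
proof (rule sum.cong[OF refl])
  fix t
  have "cnj (fourier_mode M m t) * fourier_mode M m' t * exp (- (2*pi*\<i> * of_nat k * of_nat t / of_nat L))
      = exp (- (2*pi*\<i> * of_nat t * of_nat m / of_nat M) + 2*pi*\<i> * of_nat t * of_nat m' / of_nat M
             + - (2*pi*\<i> * of_nat k * of_nat t / of_nat L))"
    unfolding cnj_fourier_mode by (simp only: fourier_mode_def exp_add)
  also have "\<dots> = exp (- (2*pi*\<i> * complex_of_real (real k - (real m' - real m) * real b) * of_nat t / of_nat L))"
    using assms by (intro arg_cong[where f = exp]) (simp add: field_simps)
  finally show "g t * exp (- (2*pi*\<i> * complex_of_real (real k - (real m' - real m) * real b) * of_nat t / of_nat L))
      = g t * cnj (fourier_mode M m t) * fourier_mode M m' t * exp (- (2*pi*\<i> * complex_of_real (real k) * of_nat t / of_nat L))"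
    by (simp add: mult_ac)
qed

lemma CGN_eq_sum_fourier_modes:
  assumes LMb: "L = M * b" and M: "M > 0" and b: "b > 0"
  shows "CGN L b \<sigma> g m m'
       = (\<Sum>t<L. of_real (\<sigma> * real L * (cmod (g t))\<^sup>2) * cnj (fourier_mode M m t) * fourier_mode M m' t)"
proof -
  have "L > 0" using LMb M b by simp
  then have "CGN L b \<sigma> g m m'
      = of_real \<sigma> * (of_nat L * (\<Sum>t<L. cnj (g t) * (g t * cnj (fourier_mode M m t) * fourier_mode M m' t)))"
    unfolding CGN_def dft_shift_eq_dft_modulation[OF LMb M b] by (simp only: dft_parseval)
  also have "\<dots> = (\<Sum>t<L. of_real (\<sigma> * real L * (cmod (g t))\<^sup>2) * cnj (fourier_mode M m t) * fourier_mode M m' t)"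
    unfolding sum_distrib_left of_real_mult complex_norm_square of_real_of_nat_eq
    by (intro sum.cong refl) (simp only: mult_ac)
  finally show ?thesis .
qed

lemma qform_CGN:
  assumes "L = M * b" "M > 0" "b > 0"
  shows "qform M (CGN L b \<sigma> g) x
       = of_real (\<sigma> * real L * (\<Sum>t<L. (cmod (g t))\<^sup>2 * (cmod (\<Sum>m<M. fourier_mode M m t * x m))\<^sup>2))"
proof -
  have "CGN L b \<sigma> g
      = (\<lambda>m m'. \<Sum>t<L. of_real (\<sigma> * real L * (cmod (g t))\<^sup>2) * cnj (fourier_mode M m t) * fourier_mode M m' t)"
    using CGN_eq_sum_fourier_modes[OF assms] by blast
  then have "qform M (CGN L b \<sigma> g) x
      = of_real (\<Sum>t<L. \<sigma> * real L * (cmod (g t))\<^sup>2 * (cmod (\<Sum>m<M. fourier_mode M m t * x m))\<^sup>2)"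
    by (simp only: qform_gram finite_lessThan)
  then show ?thesis
    by (simp add: sum_distrib_left mult.assoc)
qed

lemma sum_lessThan_mult_regroup:
  fixes f :: "nat \<Rightarrow> 'a :: comm_monoid_add"
  shows "(\<Sum>t<b * M. f t) = (\<Sum>t<M. \<Sum>j<b. f (t + j * M))"
proof -
  have "(\<Sum>t<b * M. f t) = (\<Sum>j<b. sum f {j * M..<j * M + M})"
    by (rule sum.nat_group[symmetric])
  also have "\<dots> = (\<Sum>j<b. \<Sum>t<M. f (t + j * M))"
  proof (rule sum.cong[OF refl])
    fix j
    have "sum f {0 + j * M..<M + j * M} = (\<Sum>t\<in>{0..<M}. f (t + j * M))"
      by (rule sum.shift_bounds_nat_ivl)
    then show "sum f {j * M..<j * M + M} = (\<Sum>t<M. f (t + j * M))"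
      by (simp add: add.commute lessThan_atLeast0)
  qed
  also have "\<dots> = (\<Sum>t<M. \<Sum>j<b. f (t + j * M))"
    by (rule sum.swap)
  finally show ?thesis .
qed

lemma sum_periodic_weighted_ge:
  fixes w f :: "nat \<Rightarrow> real"
  assumes periodic: "\<And>t j. f (t + j * M) = f t" and nonneg: "\<And>t. f t \<ge> 0"
    and bound: "\<And>t. t < M \<Longrightarrow> c \<le> (\<Sum>j<b. w (t + j * M))"
  shows "c * (\<Sum>t<M. f t) \<le> (\<Sum>t<b * M. w t * f t)"
proof -
  have "c * (\<Sum>t<M. f t) = (\<Sum>t<M. f t * c)"
    by (simp add: sum_distrib_left mult.commute)
  also have "\<dots> \<le> (\<Sum>t<M. f t * (\<Sum>j<b. w (t + j * M)))"
    using bound nonneg by (intro sum_mono mult_left_mono) auto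
  also have "\<dots> = (\<Sum>t<b * M. w t * f t)"
    unfolding sum_lessThan_mult_regroup by (simp add: periodic sum_distrib_left mult.commute)
  finally show ?thesis .
qed

lemma Kg_le_column_energy:
  assumes LMb: "L = M * b" and b: "b > 0" and t: "t < M"
  shows "real b * Kg L b g \<le> (\<Sum>j<b. (cmod (g (t + j * M)))\<^sup>2)"
proof -
  have "t + j * M < L" if "j < b" for j
  proof -
    have "t + j * M < Suc j * M" using t by simp
    also have "\<dots> \<le> b * M" using that by (intro mult_le_mono1) simp
    finally show ?thesis by (simp add: LMb mult.commute)
  qed
  then have "(\<Sum>j<b. (cmod (g (t + j * M)))\<^sup>2) = (\<Sum>j<b. (cmod (g ((t + j * M) mod L)))\<^sup>2)"
    by (intro sum.cong refl) simp
  moreover have "real b * Kg L b g = Min ((\<lambda>t. \<Sum>j<b. (cmod (g ((t + j * M) mod L)))\<^sup>2) ` {..<M})"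
    using b by (simp add: Kg_def LMb)
  ultimately show ?thesis
    using t by (simp add: Min_le)
qed

lemma qform_CGN_ge:
  assumes LMb: "L = M * b" and M: "M > 0" and b: "b > 0" and \<sigma>: "\<sigma> \<ge> 0"
  shows "\<sigma> * real L * real b * real M * Kg L b g * (\<Sum>m<M. (cmod (x m))\<^sup>2) \<le> Re (qform M (CGN L b \<sigma> g) x)"
proof -
  define X where "X t = (\<Sum>m<M. fourier_mode M m t * x m)" for t
  have "real b * Kg L b g * (\<Sum>t<M. (cmod (X t))\<^sup>2) \<le> (\<Sum>t<b * M. (cmod (g t))\<^sup>2 * (cmod (X t))\<^sup>2)"
    by (rule sum_periodic_weighted_ge) (simp_all add: X_def fourier_mode_periodic[OF M] Kg_le_column_energy[OF LMb b])
  also have "\<dots> = (\<Sum>t<L. (cmod (g t))\<^sup>2 * (cmod (X t))\<^sup>2)"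
    by (simp add: LMb mult.commute)
  finally have "\<sigma> * real L * (real b * Kg L b g * (real M * (\<Sum>m<M. (cmod (x m))\<^sup>2)))
      \<le> \<sigma> * real L * (\<Sum>t<L. (cmod (g t))\<^sup>2 * (cmod (X t))\<^sup>2)"
    using \<sigma> by (simp add: X_def parseval_fourier_modes[OF M] mult_left_mono)
  then show ?thesis
    by (simp add: qform_CGN[OF LMb M b] X_def mult_ac)
qed

lemma qform_CGZ:
  "qform M (\<lambda>m m'. CGZ L b S g (real m - \<delta>) (real m' - \<delta>)) x
   = of_real (\<Sum>k\<in>Iplus L. S k * (cmod (\<Sum>m<M. dft L g (real k - (real m - \<delta>) * real b) * x m))\<^sup>2)"
proof -
  have "Iplus L \<subseteq> {..<L}" by (auto simp: Iplus_def)
  then show ?thesis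
    unfolding CGZ_def by (intro qform_gram) (rule finite_subset, auto)
qed

lemma qform_CG_real_ge:
  assumes LMb: "L = M * b" and M: "M > 0" and b: "b > 0" and \<sigma>: "\<sigma> \<ge> 0"
    and S: "\<forall>k<L. S k \<ge> 0"
  shows "qform M (CG L b S \<sigma> \<delta> g) x \<in> \<real>"
    and "\<sigma> * real L * real b * real M * Kg L b g * (\<Sum>m<M. (cmod (x m))\<^sup>2) \<le> Re (qform M (CG L b S \<sigma> \<delta> g) x)"
proof -
  have split: "qform M (CG L b S \<sigma> \<delta> g) x
      = qform M (\<lambda>m m'. CGZ L b S g (real m - \<delta>) (real m' - \<delta>)) x + qform M (CGN L b \<sigma> g) x"
    unfolding CG_def by (rule qform_add)
  show "qform M (CG L b S \<sigma> \<delta> g) x \<in> \<real>"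
    unfolding split qform_CGZ qform_CGN[OF LMb M b] by simp
  have "Re (qform M (\<lambda>m m'. CGZ L b S g (real m - \<delta>) (real m' - \<delta>)) x) \<ge> 0"
    using S unfolding qform_CGZ by (auto simp: Iplus_def intro!: sum_nonneg)
  with qform_CGN_ge[OF LMb M b \<sigma>, of g x]
  show "\<sigma> * real L * real b * real M * Kg L b g * (\<Sum>m<M. (cmod (x m))\<^sup>2) \<le> Re (qform M (CG L b S \<sigma> \<delta> g) x)"
    unfolding split plus_complex.sel by linarith
qed

theorem proposition2:
  fixes L a b M :: nat and g :: "nat \<Rightarrow> complex" and S :: "nat \<Rightarrow> real"
    and \<sigma>0sq \<delta> :: real
  assumes "L > 0" and "a dvd L" and "b dvd L" and "M = L div b"
    and "Kg L b g > 0"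
    and "\<forall>k<L. S k \<ge> 0"
    and "\<sigma>0sq > 0"
  shows "(\<forall>x :: nat \<Rightarrow> complex.
            (\<Sum>m<M. (\<Sum>m'<M. CG L b S \<sigma>0sq \<delta> g m m' * x m') * cnj (x m)) \<in> \<real> \<and>
            Re (\<Sum>m<M. (\<Sum>m'<M. CG L b S \<sigma>0sq \<delta> g m m' * x m') * cnj (x m))
              \<ge> \<sigma>0sq * Kg L b g * (\<Sum>m<M. (cmod (x m))\<^sup>2))
       \<and> (\<exists>D :: nat \<Rightarrow> nat \<Rightarrow> complex.
            (\<forall>i<M. \<forall>j<M. (\<Sum>l<M. CG L b S \<sigma>0sq \<delta> g i l * D l j) = (if i = j then 1 else 0)) \<and>
            (\<forall>i<M. \<forall>j<M. (\<Sum>l<M. D i l * CG L b S \<sigma>0sq \<delta> g l j) = (if i = j then 1 else 0)))"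
proof -
  have b: "b > 0" using assms(1,3) by (cases b) auto
  have LMb: "L = M * b" using assms(3,4) by simp
  have M: "M > 0" using LMb assms(1) by (cases M) auto
  have "1 \<le> real L * real b * real M"
    using assms(1) b M by (metis One_nat_def Suc_leI nat_0_less_mult_iff of_nat_1 of_nat_le_iff of_nat_mult)
  moreover have "0 \<le> \<sigma>0sq * Kg L b g * (\<Sum>m<M. (cmod (x m))\<^sup>2)" for x
    using assms(5,7) by (simp add: sum_nonneg)
  ultimately have "\<sigma>0sq * Kg L b g * (\<Sum>m<M. (cmod (x m))\<^sup>2)
      \<le> \<sigma>0sq * real L * real b * real M * Kg L b g * (\<Sum>m<M. (cmod (x m))\<^sup>2)" for x
    using mult_left_mono[of 1 "real L * real b * real M"] by (fastforce simp: mult_ac)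
  then have coercive: "\<sigma>0sq * Kg L b g * (\<Sum>m<M. (cmod (x m))\<^sup>2) \<le> Re (qform M (CG L b S \<sigma>0sq \<delta> g) x)" for x
    using qform_CG_real_ge(2)[OF LMb M b _ assms(6)] assms(7) by (meson less_imp_le order_trans)
  have "\<sigma>0sq * Kg L b g > 0"
    using assms(5,7) by simp
  from invertible_if_qform_coercive[OF this coercive]
  show ?thesis
    using qform_CG_real_ge(1)[OF LMb M b _ assms(6)] assms(7) coercive unfolding qform_def by simp
qed

end
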